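(* Let $X$ be a Banach space containing no (isomorphic) copy of $c_0$, and let $\sum x_n$ be a series in $X$ which is not unconditionally convergent. Then the sets $E=\left\{s \in S : \left(\sum_{i=1}^n x_{s(i)}\right)_n \text{ is bounded}\right\}$ and $F=\left\{p \in P : \left(\sum_{i=1}^n x_{p(i)}\right)_n \text{ is bounded}\right\}$ are meager in $S$ and $P$, respectively.
   Context: $S=\{s\in\mathbb{N}^{\mathbb{N}} : s \text{ strictly increasing}\}$ and $P=\{p\in\mathbb{N}^{\mathbb{N}} : p \text{ a bijection of }\mathbb{N}\}$, with the subspace topology of $\mathbb{N}^{\mathbb{N}}$ (product of discrete spaces). *)

theory Defs
  imports "HOL-Analysis.Analysis"
begin

definition baire_top :: "(nat \<Rightarrow> nat) topology" where
  "baire_top = product_topology (\<lambda>_. discrete_topology (UNIV :: nat set)) UNIV"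

definition S_incr :: "(nat \<Rightarrow> nat) set" where
  "S_incr = {s. strict_mono s}"

definition P_perm :: "(nat \<Rightarrow> nat) set" where
  "P_perm = {p. bij p}"

definition nowhere_dense_in :: "'a topology \<Rightarrow> 'a set \<Rightarrow> bool" where
  "nowhere_dense_in T N \<longleftrightarrow> N \<subseteq> topspace T \<and> T interior_of (T closure_of N) = {}"

definition meager_in :: "'a topology \<Rightarrow> 'a set \<Rightarrow> bool" where
  "meager_in T A \<longleftrightarrow> (\<exists>\<F>. countable \<F> \<and> (\<forall>N\<in>\<F>. nowhere_dense_in T N) \<and> A \<subseteq> \<Union>\<F>)"

definition c0 :: "(nat \<Rightarrow> real) set" where
  "c0 = {f. f \<longlonglongrightarrow> 0}"

definition sup_norm :: "(nat \<Rightarrow> real) \<Rightarrow> real" where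
  "sup_norm f = (SUP n. \<bar>f n\<bar>)"

definition contains_c0 :: "'a::real_normed_vector itself \<Rightarrow> bool" where
  "contains_c0 _ \<longleftrightarrow> (\<exists>(T :: (nat \<Rightarrow> real) \<Rightarrow> 'a) a b. a > 0 \<and> b > 0 \<and>
      (\<forall>f\<in>c0. \<forall>g\<in>c0. T (\<lambda>n. f n + g n) = T f + T g) \<and>
      (\<forall>f\<in>c0. \<forall>c. T (\<lambda>n. c * f n) = c *\<^sub>R T f) \<and>
      (\<forall>f\<in>c0. a * sup_norm f \<le> norm (T f) \<and> norm (T f) \<le> b * sup_norm f))"

definition uncond_convergent :: "(nat \<Rightarrow> 'a::real_normed_vector) \<Rightarrow> bool" where
  "uncond_convergent x \<longleftrightarrow> (\<forall>p. bij p \<longrightarrow> summable (\<lambda>n. x (p n)))"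

end

theory Submission
  imports Defs
begin

text \<open>
  By the Bessaga--Pelczynski theorem, in a Banach space without a copy of \<open>c\<^sub>0\<close> a series whose
  finite subsums are bounded converges unconditionally. Hence, for a series that does not, the sums
  over finite sets of indices beyond any \<open>N\<close> are unbounded, so every finite initial segment of an
  increasing sequence or of a permutation can be continued until some partial sum exceeds any given
  bound. Thus, for each \<open>M\<close>, the sequences all of whose partial sums have norm at most \<open>M\<close> form
  a nowhere dense set, and the sequences with bounded partial sums lie in the countable union of
  these sets.

  For Bessaga--Pelczynski: if the subseries are not uniformly Cauchy, disjoint blocks yield a
  sequence bounded away from \<open>0\<close> whose finite subsums are bounded. It is weakly null, so Mazur's
  gliding hump (finite nets of the compact sets of combinations with coefficients in \<open>[-1, 1]\<close>,
  together with norming functionals from Hahn--Banach) extracts a subsequence that is almost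
  monotone, \<open>\<parallel>S\<^sub>p\<parallel> - \<delta> \<le> \<parallel>S\<^sub>n\<parallel>\<close> for \<open>p \<le> n\<close>; such a subsequence is equivalent to the unit vector
  basis of \<open>c\<^sub>0\<close>.
\<close>

section \<open>Norming functionals\<close>

definition dual_unit_ball :: "('a::real_normed_vector \<Rightarrow> real) set" where
  "dual_unit_ball = {f. linear f \<and> (\<forall>v. \<bar>f v\<bar> \<le> norm v)}"

text \<open>Partial linear functionals are represented by their graphs, so that Zorn's lemma applies
  to the subset order.\<close>
definition dominated_linear_graph :: "('a::real_normed_vector \<times> real) set \<Rightarrow> bool" where
  "dominated_linear_graph G \<longleftrightarrow>
     (\<forall>x a b. (x, a) \<in> G \<longrightarrow> (x, b) \<in> G \<longrightarrow> a = b) \<and>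
     (\<forall>x a y b. (x, a) \<in> G \<longrightarrow> (y, b) \<in> G \<longrightarrow> (x + y, a + b) \<in> G) \<and>
     (\<forall>x a c. (x, a) \<in> G \<longrightarrow> (c *\<^sub>R x, c * a) \<in> G) \<and>
     (\<forall>x a. (x, a) \<in> G \<longrightarrow> a \<le> norm x)"

lemma dominated_linear_graphD:
  assumes "dominated_linear_graph G"
  shows dominated_linear_graph_functional: "(x, a) \<in> G \<Longrightarrow> (x, b) \<in> G \<Longrightarrow> a = b"
    and dominated_linear_graph_add: "(x, a) \<in> G \<Longrightarrow> (y, b) \<in> G \<Longrightarrow> (x + y, a + b) \<in> G"
    and dominated_linear_graph_scale: "(x, a) \<in> G \<Longrightarrow> (r *\<^sub>R x, r * a) \<in> G"
    and dominated_linear_graph_le_norm: "(x, a) \<in> G \<Longrightarrow> a \<le> norm x"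
  using assms unfolding dominated_linear_graph_def by blast+

lemma dominated_linear_graph_line: "dominated_linear_graph {(c *\<^sub>R e, c * norm e) | c. True}"
  (is "dominated_linear_graph ?L")
  unfolding dominated_linear_graph_def
proof (intro conjI allI impI)
  fix x a b assume "(x, a) \<in> ?L" "(x, b) \<in> ?L"
  then obtain c d where "x = c *\<^sub>R e" "a = c * norm e" "x = d *\<^sub>R e" "b = d * norm e" by blast
  then show "a = b" by (cases "e = 0") (auto dest: scaleR_cancel_right[THEN iffD1])
next
  fix x a y b assume "(x, a) \<in> ?L" "(y, b) \<in> ?L"
  then obtain c d where "x = c *\<^sub>R e" "a = c * norm e" "y = d *\<^sub>R e" "b = d * norm e" by blast
  then show "(x + y, a + b) \<in> ?L"
    by (intro CollectI exI[of _ "c + d"]) (simp add: scaleR_add_left distrib_right)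
next
  fix x a r assume "(x, a) \<in> ?L"
  then obtain c where "x = c *\<^sub>R e" "a = c * norm e" by blast
  then show "(r *\<^sub>R x, r * a) \<in> ?L" by (intro CollectI exI[of _ "r * c"]) simp
next
  fix x a assume "(x, a) \<in> ?L"
  then obtain c where "x = c *\<^sub>R e" "a = c * norm e" by blast
  then show "a \<le> norm x" by (simp add: mult_right_mono)
qed

lemma dominated_linear_graph_Union:
  assumes "C \<in> chains {G. dominated_linear_graph G}"
  shows "dominated_linear_graph (\<Union>C)"
proof -
  have dom: "\<And>G. G \<in> C \<Longrightarrow> dominated_linear_graph G"
    and chain: "\<And>G H. G \<in> C \<Longrightarrow> H \<in> C \<Longrightarrow> G \<subseteq> H \<or> H \<subseteq> G"
    using assms unfolding chains_def chain_subset_def by auto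
  have common: "\<exists>G\<in>C. p \<in> G \<and> q \<in> G" if "p \<in> \<Union>C" "q \<in> \<Union>C" for p q
    using that chain by blast
  show ?thesis
    unfolding dominated_linear_graph_def
  proof (intro conjI allI impI)
    fix x a b assume "(x, a) \<in> \<Union>C" "(x, b) \<in> \<Union>C"
    then obtain G where "G \<in> C" "(x, a) \<in> G" "(x, b) \<in> G" using common by blast
    then show "a = b" using dominated_linear_graph_functional[OF dom] by blast
  next
    fix x a y b assume "(x, a) \<in> \<Union>C" "(y, b) \<in> \<Union>C"
    then obtain G where "G \<in> C" "(x, a) \<in> G" "(y, b) \<in> G" using common by blast
    then show "(x + y, a + b) \<in> \<Union>C" using dominated_linear_graph_add[OF dom] by blast
  next
    fix x a r assume "(x, a) \<in> \<Union>C"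
    then obtain G where "G \<in> C" "(x, a) \<in> G" by blast
    then show "(r *\<^sub>R x, r * a) \<in> \<Union>C" using dominated_linear_graph_scale[OF dom] by blast
  next
    fix x a assume "(x, a) \<in> \<Union>C"
    then obtain G where "G \<in> C" "(x, a) \<in> G" by blast
    then show "a \<le> norm x" using dominated_linear_graph_le_norm[OF dom] by blast
  qed
qed

lemma dominated_linear_graph_extend_le_norm:
  assumes G: "dominated_linear_graph G" and "(x, a) \<in> G"
    and lo: "\<And>x a. (x, a) \<in> G \<Longrightarrow> a - norm (x - z) \<le> c"
    and hi: "\<And>y b. (y, b) \<in> G \<Longrightarrow> c \<le> norm (y + z) - b"
  shows "a + t * c \<le> norm (x + t *\<^sub>R z)"
proof -
  note scale = dominated_linear_graph_scale[OF G \<open>(x, a) \<in> G\<close>]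
  define v where "v = x + t *\<^sub>R z"
  consider "t = 0" | "t > 0" | "t < 0" by linarith
  then have "a + t * c \<le> norm v"
  proof cases
    case 1
    then show ?thesis using dominated_linear_graph_le_norm[OF G \<open>(x, a) \<in> G\<close>] by (simp add: v_def)
  next
    case 2
    have "c \<le> norm ((1 / t) *\<^sub>R x + z) - a / t" using hi[OF scale[of "1 / t"]] by simp
    also have "(1 / t) *\<^sub>R x + z = (1 / t) *\<^sub>R v" using 2 by (simp add: v_def algebra_simps)
    finally show ?thesis using 2 by (simp add: field_simps)
  next
    case 3
    have "a / (- t) - norm ((1 / (- t)) *\<^sub>R x - z) \<le> c" using lo[OF scale[of "1 / (- t)"]] by simp
    also have "(1 / (- t)) *\<^sub>R x - z = (1 / (- t)) *\<^sub>R v" using 3 by (simp add: v_def algebra_simps)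
    finally show ?thesis using 3 by (simp add: field_simps)
  qed
  then show ?thesis unfolding v_def .
qed

lemma dominated_linear_graph_extend:
  assumes G: "dominated_linear_graph G" and z: "\<And>c. (z, c) \<notin> G"
    and lo: "\<And>x a. (x, a) \<in> G \<Longrightarrow> a - norm (x - z) \<le> c"
    and hi: "\<And>y b. (y, b) \<in> G \<Longrightarrow> c \<le> norm (y + z) - b"
  shows "dominated_linear_graph {(x + t *\<^sub>R z, a + t * c) | x a t. (x, a) \<in> G}"
    (is "dominated_linear_graph ?G'")
  unfolding dominated_linear_graph_def
proof (intro conjI allI impI)
  note add = dominated_linear_graph_add[OF G] and scale = dominated_linear_graph_scale[OF G]
  fix v a' b' assume "(v, a') \<in> ?G'" "(v, b') \<in> ?G'"
  then obtain x a t y b s where A: "(x, a) \<in> G" "v = x + t *\<^sub>R z" "a' = a + t * c"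
    and B: "(y, b) \<in> G" "v = y + s *\<^sub>R z" "b' = b + s * c" by blast
  have "t = s"
  proof (rule ccontr)
    assume "t \<noteq> s"
    have "(x - y, a - b) \<in> G" using add[OF A(1) scale[OF B(1), of "-1"]] by simp
    then have "((1 / (s - t)) *\<^sub>R (x - y), (1 / (s - t)) * (a - b)) \<in> G" by (rule scale)
    moreover have "x - y = (s - t) *\<^sub>R z" using A(2) B(2) by (simp add: algebra_simps)
    ultimately have "(z, (a - b) / (s - t)) \<in> G" using \<open>t \<noteq> s\<close> by simp
    then show False using z by blast
  qed
  then show "a' = b'" using A B dominated_linear_graph_functional[OF G] by auto
next
  fix v a' w b' assume "(v, a') \<in> ?G'" "(w, b') \<in> ?G'"
  then obtain x a t y b s where A: "(x, a) \<in> G" "v = x + t *\<^sub>R z" "a' = a + t * c"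
    and B: "(y, b) \<in> G" "w = y + s *\<^sub>R z" "b' = b + s * c" by blast
  then have "(v + w, a' + b') = ((x + y) + (t + s) *\<^sub>R z, (a + b) + (t + s) * c)"
    by (simp add: algebra_simps)
  then show "(v + w, a' + b') \<in> ?G'" using dominated_linear_graph_add[OF G A(1) B(1)] by blast
next
  fix v a' r assume "(v, a') \<in> ?G'"
  then obtain x a t where A: "(x, a) \<in> G" "v = x + t *\<^sub>R z" "a' = a + t * c" by blast
  then have "(r *\<^sub>R v, r * a') = (r *\<^sub>R x + (r * t) *\<^sub>R z, r * a + (r * t) * c)"
    by (simp add: algebra_simps)
  then show "(r *\<^sub>R v, r * a') \<in> ?G'" using dominated_linear_graph_scale[OF G A(1)] by blast
next
  fix v a' assume "(v, a') \<in> ?G'"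
  then obtain x a t where "(x, a) \<in> G" "v = x + t *\<^sub>R z" "a' = a + t * c" by blast
  then show "a' \<le> norm v" using dominated_linear_graph_extend_le_norm[OF G _ lo hi] by simp
qed

lemma dominated_linear_graph_extension:
  assumes G: "dominated_linear_graph G" "G \<noteq> {}" and z: "\<And>c. (z, c) \<notin> G"
  shows "\<exists>G'. dominated_linear_graph G' \<and> G \<subset> G'"
proof -
  obtain x0 a0 where "(x0, a0) \<in> G" using G(2) by auto
  from dominated_linear_graph_scale[OF G(1) this, of 0] have zero: "(0, 0) \<in> G" by simp
  define L where "L = {a - norm (x - z) | x a. (x, a) \<in> G}"
  have L_le: "l \<le> norm (y + z) - b" if "l \<in> L" "(y, b) \<in> G" for l y b
  proof -
    from that obtain x a where xa: "(x, a) \<in> G" "l = a - norm (x - z)" unfolding L_def by blast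
    have "a + b \<le> norm (x + y)"
      using dominated_linear_graph_add[OF G(1) xa(1) that(2)]
      by (rule dominated_linear_graph_le_norm[OF G(1)])
    also have "\<dots> \<le> norm (x - z) + norm (y + z)"
      using norm_triangle_ineq[of "x - z" "y + z"] by simp
    finally show ?thesis using xa(2) by simp
  qed
  have "bdd_above L" using L_le zero by (intro bdd_aboveI) blast
  then have lo: "a - norm (x - z) \<le> Sup L" if "(x, a) \<in> G" for x a
    using that unfolding L_def by (blast intro: cSup_upper)
  have "L \<noteq> {}" using zero unfolding L_def by blast
  then have hi: "Sup L \<le> norm (y + z) - b" if "(y, b) \<in> G" for y b
    using that L_le by (blast intro: cSup_least)
  define G' where "G' = {(x + t *\<^sub>R z, a + t * Sup L) | x a t. (x, a) \<in> G}"
  have "dominated_linear_graph G'"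
    unfolding G'_def by (rule dominated_linear_graph_extend[OF G(1) z lo hi])
  moreover have mem: "(x + t *\<^sub>R z, a + t * Sup L) \<in> G'" if "(x, a) \<in> G" for x a t
    unfolding G'_def using that by blast
  have "G \<subseteq> G'" using mem[where t = 0] by auto
  moreover have "(z, Sup L) \<in> G'" using mem[OF zero, where t = 1] by simp
  ultimately show ?thesis using z by blast
qed

lemma total_dominated_linear_graph_exists:
  "\<exists>M. dominated_linear_graph M \<and> (e, norm e) \<in> M \<and> (\<forall>v. \<exists>a. (v, a) \<in> M)"
proof -
  define \<G> where "\<G> = {G. dominated_linear_graph G \<and> (e, norm e) \<in> G}"
  have "\<exists>U\<in>\<G>. \<forall>G\<in>C. G \<subseteq> U" if C: "C \<in> chains \<G>" for C
  proof (cases "C = {}")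
    case True
    have "(e, norm e) \<in> {(c *\<^sub>R e, c * norm e) | c. True}"
      by (rule CollectI, rule exI[of _ 1]) simp
    then show ?thesis using dominated_linear_graph_line[of e] True unfolding \<G>_def by blast
  next
    case False
    then obtain G where "G \<in> C" by blast
    have "C \<subseteq> \<G>" using C unfolding chains_def by simp
    then have "C \<in> chains {G. dominated_linear_graph G}"
      using C unfolding chains_def \<G>_def by auto
    then have "dominated_linear_graph (\<Union>C)" by (rule dominated_linear_graph_Union)
    moreover have "(e, norm e) \<in> \<Union>C" using \<open>G \<in> C\<close> \<open>C \<subseteq> \<G>\<close> unfolding \<G>_def by auto
    ultimately show ?thesis unfolding \<G>_def by blast
  qed
  then obtain M where "M \<in> \<G>" and max: "\<And>G. G \<in> \<G> \<Longrightarrow> M \<subseteq> G \<Longrightarrow> G = M"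
    using Zorn_Lemma2[of \<G>] by auto
  then have M: "dominated_linear_graph M" and eM: "(e, norm e) \<in> M" unfolding \<G>_def by auto
  have "\<exists>a. (v, a) \<in> M" for v
  proof (rule ccontr)
    assume "\<nexists>a. (v, a) \<in> M"
    then obtain G where "dominated_linear_graph G" "M \<subset> G"
      using dominated_linear_graph_extension[OF M, of v] eM by blast
    then show False using max[of G] eM unfolding \<G>_def by blast
  qed
  then show ?thesis using M eM by blast
qed

lemma norming_functional_exists: "\<exists>f\<in>dual_unit_ball. f e = norm e"
proof -
  obtain M where M: "dominated_linear_graph M" and eM: "(e, norm e) \<in> M"
    and total: "\<And>v. \<exists>a. (v, a) \<in> M"
    using total_dominated_linear_graph_exists by blast
  note add = dominated_linear_graph_add[OF M] and scale = dominated_linear_graph_scale[OF M]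
    and bound = dominated_linear_graph_le_norm[OF M]
  define f where "f v = (THE a. (v, a) \<in> M)" for v
  have f_eq: "f v = a" if "(v, a) \<in> M" for v a
    unfolding f_def
    by (rule the_equality) (use that dominated_linear_graph_functional[OF M] in blast)+
  have f_graph: "(v, f v) \<in> M" for v
    using total[of v] f_eq by blast
  have "linear f"
  proof (rule linearI)
    show "f (v + w) = f v + f w" for v w using f_eq[OF add[OF f_graph f_graph]] .
    show "f (r *\<^sub>R v) = r *\<^sub>R f v" for r v using f_eq[OF scale[OF f_graph]] by simp
  qed
  moreover have "\<bar>f v\<bar> \<le> norm v" for v
    using bound[OF f_graph, of v] bound[OF scale[OF f_graph[of v], of "-1"]] by simp
  ultimately show ?thesis using f_eq[OF eM] unfolding dual_unit_ball_def by blast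
qed

section \<open>Series with bounded finite subsums\<close>

definition subsums_bounded :: "(nat \<Rightarrow> 'a::real_normed_vector) \<Rightarrow> real \<Rightarrow> bool" where
  "subsums_bounded u K \<longleftrightarrow> (\<forall>A. finite A \<longrightarrow> norm (\<Sum>k\<in>A. u k) \<le> K)"

lemma subsums_bounded_comp:
  assumes "inj \<sigma>" "subsums_bounded u K"
  shows "subsums_bounded (u \<circ> \<sigma>) K"
  unfolding subsums_bounded_def
proof (intro allI impI)
  fix A :: "nat set" assume "finite A"
  have "(\<Sum>k\<in>A. (u \<circ> \<sigma>) k) = (\<Sum>k\<in>\<sigma> ` A. u k)"
    using sum.reindex[OF inj_on_subset[OF assms(1) subset_UNIV], of u A] by simp
  then show "norm (\<Sum>k\<in>A. (u \<circ> \<sigma>) k) \<le> K"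
    using assms(2) \<open>finite A\<close> unfolding subsums_bounded_def by simp
qed

lemma sum_abs_functional_le:
  assumes f: "f \<in> dual_unit_ball" and u: "subsums_bounded u K" and "finite A"
  shows "(\<Sum>k\<in>A. \<bar>f (u k)\<bar>) \<le> 2 * K"
proof -
  have lin: "linear f" and f_le: "\<And>v. \<bar>f v\<bar> \<le> norm v" using f unfolding dual_unit_ball_def by auto
  define P where "P = {k \<in> A. 0 \<le> f (u k)}"
  define N where "N = {k \<in> A. f (u k) < 0}"
  have "(\<Sum>k\<in>A. \<bar>f (u k)\<bar>) = (\<Sum>k\<in>P. f (u k)) - (\<Sum>k\<in>N. f (u k))"
  proof -
    have "A = P \<union> N" "P \<inter> N = {}" unfolding P_def N_def by auto
    then have "(\<Sum>k\<in>A. \<bar>f (u k)\<bar>) = (\<Sum>k\<in>P. \<bar>f (u k)\<bar>) + (\<Sum>k\<in>N. \<bar>f (u k)\<bar>)"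
      using \<open>finite A\<close> by (simp add: sum.union_disjoint)
    also have "\<dots> = (\<Sum>k\<in>P. f (u k)) - (\<Sum>k\<in>N. f (u k))"
      unfolding P_def N_def by (simp add: sum_negf[symmetric])
    finally show ?thesis .
  qed
  also have "\<dots> = f (\<Sum>k\<in>P. u k) - f (\<Sum>k\<in>N. u k)"
    by (simp add: linear_sum[OF lin])
  also have "\<dots> \<le> norm (\<Sum>k\<in>P. u k) + norm (\<Sum>k\<in>N. u k)"
    using f_le[of "\<Sum>k\<in>P. u k"] f_le[of "\<Sum>k\<in>N. u k"] by linarith
  also have "\<dots> \<le> K + K"
    using u \<open>finite A\<close> unfolding subsums_bounded_def P_def N_def by (intro add_mono) auto
  finally show ?thesis by simp
qed

lemma functional_tendsto_zero_if_subsums_bounded: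
  assumes "f \<in> dual_unit_ball" and "subsums_bounded u K"
  shows "(\<lambda>k. f (u k)) \<longlonglongrightarrow> 0"
proof -
  have "summable (\<lambda>k. \<bar>f (u k)\<bar>)"
    by (rule summableI_nonneg_bounded[where x = "2 * K"])
      (use sum_abs_functional_le[OF assms] in auto)
  then show ?thesis using summable_LIMSEQ_zero tendsto_rabs_zero_iff by blast
qed

lemma norm_sum_scaleR_le:
  assumes u: "subsums_bounded u K" and "finite A" and c: "\<And>k. k \<in> A \<Longrightarrow> \<bar>c k\<bar> \<le> \<delta>" and "0 \<le> \<delta>"
  shows "norm (\<Sum>k\<in>A. c k *\<^sub>R u k) \<le> 2 * K * \<delta>"
proof -
  obtain g where g: "g \<in> dual_unit_ball" "g (\<Sum>k\<in>A. c k *\<^sub>R u k) = norm (\<Sum>k\<in>A. c k *\<^sub>R u k)"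
    using norming_functional_exists by blast
  have lin: "linear g" using g(1) unfolding dual_unit_ball_def by auto
  have "norm (\<Sum>k\<in>A. c k *\<^sub>R u k) = (\<Sum>k\<in>A. c k * g (u k))"
    using g(2) by (simp add: linear_sum[OF lin] linear_scale[OF lin])
  also have "\<dots> \<le> (\<Sum>k\<in>A. \<delta> * \<bar>g (u k)\<bar>)"
  proof (rule sum_mono)
    fix k assume "k \<in> A"
    have "c k * g (u k) \<le> \<bar>c k\<bar> * \<bar>g (u k)\<bar>" by (simp add: abs_mult[symmetric])
    also have "\<dots> \<le> \<delta> * \<bar>g (u k)\<bar>" using c[OF \<open>k \<in> A\<close>] by (simp add: mult_right_mono)
    finally show "c k * g (u k) \<le> \<delta> * \<bar>g (u k)\<bar>" .
  qed
  also have "\<dots> = \<delta> * (\<Sum>k\<in>A. \<bar>g (u k)\<bar>)" by (simp add: sum_distrib_left)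
  also have "\<dots> \<le> \<delta> * (2 * K)"
    using sum_abs_functional_le[OF g(1) u \<open>finite A\<close>] \<open>0 \<le> \<delta>\<close> by (rule mult_left_mono)
  finally show ?thesis by (simp add: algebra_simps)
qed

section \<open>Mazur's selection of an almost monotone subsequence\<close>

definition unit_combinations :: "nat \<Rightarrow> (nat \<Rightarrow> 'a::real_normed_vector) \<Rightarrow> 'a set" where
  "unit_combinations p w = (\<lambda>a. \<Sum>j<p. a j *\<^sub>R w j) ` (PiE {..<p} (\<lambda>_. {-1..1}))"

lemma compact_unit_combinations: "compact (unit_combinations p w)"
proof -
  let ?X = "product_topology (\<lambda>_. euclideanreal) {..<p}"
  have "compactin ?X (PiE {..<p} (\<lambda>_. {-1..1}))" by (simp add: compactin_PiE)
  moreover have "continuous_map ?X euclidean (\<lambda>a. \<Sum>j<p. a j *\<^sub>R w j)"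
  proof (intro continuous_map_sum)
    fix j assume "j \<in> {..<p}"
    then have "continuous_map ?X euclideanreal (\<lambda>a. a j)"
      by (rule continuous_map_product_projection[where X = "\<lambda>_. euclideanreal"])
    then show "continuous_map ?X euclidean (\<lambda>a. a j *\<^sub>R w j)"
      by (simp add: continuous_map_atin tendsto_scaleR)
  qed simp
  ultimately show ?thesis
    unfolding unit_combinations_def using image_compactin compactin_euclidean_iff by blast
qed

lemma sum_in_unit_combinations:
  assumes "\<And>j. j < p \<Longrightarrow> \<bar>a j\<bar> \<le> 1"
  shows "(\<Sum>j<p. a j *\<^sub>R w j) \<in> unit_combinations p w"
  unfolding unit_combinations_def
  by (rule image_eqI[where x = "restrict a {..<p}"]) (use assms in \<open>auto simp: abs_le_iff\<close>)

lemma unit_combinations_cong: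
  assumes "\<And>j. j < p \<Longrightarrow> w j = w' j"
  shows "unit_combinations p w = unit_combinations p w'"
proof -
  have "(\<Sum>j<p. a j *\<^sub>R w j) = (\<Sum>j<p. a j *\<^sub>R w' j)" for a
    using assms by (intro sum.cong) auto
  then show ?thesis unfolding unit_combinations_def by simp
qed

lemma dependent_choice_prefixes:
  assumes "\<And>xs. (\<forall>i<length xs. P (take i xs) (xs ! i)) \<Longrightarrow> \<exists>y. P xs y"
  shows "\<exists>f. \<forall>n. P (map f [0..<n]) (f n)"
proof -
  define pre where "pre = rec_nat [] (\<lambda>_ xs. xs @ [SOME y. P xs y])"
  define f where "f n = (SOME y. P (pre n) y)" for n
  have pre: "pre n = map f [0..<n]" for n
    by (induction n) (simp_all add: pre_def f_def)
  have "P (pre n) (f n)" for n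
  proof (induction n rule: less_induct)
    case (less n)
    then have "\<forall>i<length (pre n). P (take i (pre n)) (pre n ! i)"
      by (simp add: pre take_map min_def)
    then show ?case unfolding f_def by (rule someI_ex[OF assms])
  qed
  then show ?thesis using pre by metis
qed

lemma eventually_finite_family_small:
  fixes \<Phi> :: "('a \<Rightarrow> real) set"
  assumes "finite \<Phi>" and null: "\<And>f. f \<in> \<Phi> \<Longrightarrow> (\<lambda>k. f (u k)) \<longlonglongrightarrow> 0" and "\<eta> > 0"
  shows "eventually (\<lambda>k. \<forall>f\<in>\<Phi>. \<bar>f (u k)\<bar> \<le> \<eta>) sequentially"
  using \<open>finite \<Phi>\<close>
proof (rule eventually_ball_finite, intro ballI)
  fix f assume "f \<in> \<Phi>"
  then have "(\<lambda>k. \<bar>f (u k)\<bar>) \<longlonglongrightarrow> 0" using null by (simp add: tendsto_rabs_zero_iff)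
  from order_tendstoD(2)[OF this \<open>\<eta> > 0\<close>]
  show "eventually (\<lambda>k. \<bar>f (u k)\<bar> \<le> \<eta>) sequentially" by (rule eventually_mono) simp
qed

lemma subsequence_small_on_finite_families:
  fixes u :: "nat \<Rightarrow> 'a" and \<Phi> :: "nat \<Rightarrow> (nat \<Rightarrow> nat) \<Rightarrow> ('a \<Rightarrow> real) set"
  assumes fin: "\<And>p \<sigma>. finite (\<Phi> p \<sigma>)"
    and null: "\<And>p \<sigma> f. f \<in> \<Phi> p \<sigma> \<Longrightarrow> (\<lambda>k. f (u k)) \<longlonglongrightarrow> 0"
    and local: "\<And>p \<sigma> \<sigma>'. (\<And>j. j < p \<Longrightarrow> \<sigma> j = \<sigma>' j) \<Longrightarrow> \<Phi> p \<sigma> = \<Phi> p \<sigma>'"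
    and \<eta>: "\<And>j. \<eta> j > 0"
  shows "\<exists>\<sigma>. strict_mono \<sigma> \<and> (\<forall>p j f. p \<le> j \<longrightarrow> f \<in> \<Phi> p \<sigma> \<longrightarrow> \<bar>f (u (\<sigma> j))\<bar> \<le> \<eta> j)"
proof -
  define P where "P xs k \<longleftrightarrow> (\<forall>i\<in>set xs. i < k) \<and>
    (\<forall>p\<le>length xs. \<forall>f\<in>\<Phi> p (\<lambda>i. xs ! i). \<bar>f (u k)\<bar> \<le> \<eta> (length xs))" for xs k
  have "\<exists>k. P xs k" for xs
  proof -
    have "finite (\<Union>p\<le>length xs. \<Phi> p (\<lambda>i. xs ! i))" using fin by simp
    then have small: "eventually (\<lambda>k. \<forall>f\<in>(\<Union>p\<le>length xs. \<Phi> p (\<lambda>i. xs ! i)).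
        \<bar>f (u k)\<bar> \<le> \<eta> (length xs)) sequentially"
      using null \<eta> by (intro eventually_finite_family_small) blast+
    have large: "eventually (\<lambda>k. \<forall>i\<in>set xs. i < k) sequentially"
      by (rule eventually_ball_finite) (auto intro: eventually_gt_at_top)
    have "eventually (P xs) sequentially"
      using eventually_conj[OF large small] by (rule eventually_mono) (auto simp: P_def)
    then show ?thesis unfolding eventually_sequentially by blast
  qed
  then obtain \<sigma> where \<sigma>: "\<And>n. P (map \<sigma> [0..<n]) (\<sigma> n)"
    using dependent_choice_prefixes[of P] by blast
  have "strict_mono \<sigma>"
    by (rule strict_monoI) (use \<sigma> in \<open>auto simp: P_def\<close>)
  moreover have "\<bar>f (u (\<sigma> j))\<bar> \<le> \<eta> j" if "p \<le> j" "f \<in> \<Phi> p \<sigma>" for p j f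
  proof -
    have "\<Phi> p \<sigma> = \<Phi> p (\<lambda>i. map \<sigma> [0..<j] ! i)" by (rule local) (use \<open>p \<le> j\<close> in simp)
    then show ?thesis using \<sigma>[of j] that unfolding P_def by auto
  qed
  ultimately show ?thesis by blast
qed

lemma functional_partial_sum_le_norm:
  fixes z :: "nat \<Rightarrow> 'a::real_normed_vector"
  assumes f: "f \<in> dual_unit_ball" and "p \<le> n" and a: "\<And>j. j < n \<Longrightarrow> \<bar>a j\<bar> \<le> 1"
    and small: "\<And>j. p \<le> j \<Longrightarrow> j < n \<Longrightarrow> \<bar>f (z j)\<bar> \<le> \<eta> j"
  shows "f (\<Sum>j<p. a j *\<^sub>R z j) - (\<Sum>j\<in>{p..<n}. \<eta> j) \<le> norm (\<Sum>j<n. a j *\<^sub>R z j)"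
proof -
  have lin: "linear f" and f_le: "\<And>v. \<bar>f v\<bar> \<le> norm v" using f unfolding dual_unit_ball_def by auto
  have "(\<Sum>j<n. a j *\<^sub>R z j) = (\<Sum>j<p. a j *\<^sub>R z j) + (\<Sum>j\<in>{p..<n}. a j *\<^sub>R z j)"
    using \<open>p \<le> n\<close> by (simp add: atLeast0LessThan[symmetric] sum.atLeastLessThan_concat)
  then have "f (\<Sum>j<n. a j *\<^sub>R z j) = f (\<Sum>j<p. a j *\<^sub>R z j) + (\<Sum>j\<in>{p..<n}. a j * f (z j))"
    by (simp add: linear_add[OF lin] linear_sum[OF lin] linear_scale[OF lin])
  moreover have "- (\<Sum>j\<in>{p..<n}. \<eta> j) \<le> (\<Sum>j\<in>{p..<n}. a j * f (z j))"
  proof -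
    have "\<bar>\<Sum>j\<in>{p..<n}. a j * f (z j)\<bar> \<le> (\<Sum>j\<in>{p..<n}. \<bar>a j * f (z j)\<bar>)"
      by (rule sum_abs)
    also have "\<dots> \<le> (\<Sum>j\<in>{p..<n}. \<eta> j)"
    proof (rule sum_mono)
      fix j assume "j \<in> {p..<n}"
      then have "\<bar>a j\<bar> * \<bar>f (z j)\<bar> \<le> 1 * \<eta> j"
        using a small by (intro mult_mono) auto
      then show "\<bar>a j * f (z j)\<bar> \<le> \<eta> j" by (simp add: abs_mult)
    qed
    finally show ?thesis by linarith
  qed
  moreover have "f (\<Sum>j<n. a j *\<^sub>R z j) \<le> norm (\<Sum>j<n. a j *\<^sub>R z j)" using f_le abs_le_D1 by blast
  ultimately show ?thesis by linarith
qed

lemma norm_partial_sum_almost_le: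
  fixes z :: "nat \<Rightarrow> 'a::real_normed_vector"
  assumes f: "f \<in> dual_unit_ball" "f e = norm e" and close: "norm ((\<Sum>j<p. a j *\<^sub>R z j) - e) \<le> r"
    and "p \<le> n" and a: "\<And>j. j < n \<Longrightarrow> \<bar>a j\<bar> \<le> 1"
    and small: "\<And>j. p \<le> j \<Longrightarrow> j < n \<Longrightarrow> \<bar>f (z j)\<bar> \<le> \<eta> j"
  shows "norm (\<Sum>j<p. a j *\<^sub>R z j) - 2 * r - (\<Sum>j\<in>{p..<n}. \<eta> j) \<le> norm (\<Sum>j<n. a j *\<^sub>R z j)"
proof -
  define S where "S = (\<Sum>j<p. a j *\<^sub>R z j)"
  have "f S = f e + f (S - e)" using f(1) unfolding dual_unit_ball_def by (simp add: linear_diff)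
  moreover have "\<bar>f (S - e)\<bar> \<le> norm (S - e)" using f(1) unfolding dual_unit_ball_def by blast
  moreover have "norm S \<le> norm e + norm (S - e)" by (rule norm_triangle_sub)
  moreover have "f S - (\<Sum>j\<in>{p..<n}. \<eta> j) \<le> norm (\<Sum>j<n. a j *\<^sub>R z j)"
    unfolding S_def using f(1) \<open>p \<le> n\<close> a small by (rule functional_partial_sum_le_norm)
  ultimately show ?thesis using close f(2) unfolding S_def by linarith
qed

lemma almost_monotone_if_small_on_nets:
  fixes z :: "nat \<Rightarrow> 'a::real_normed_vector"
  assumes "\<delta> > 0" and \<phi>: "\<And>e. \<phi> e \<in> dual_unit_ball \<and> \<phi> e e = norm e"
    and net: "\<And>p. unit_combinations p z \<subseteq> (\<Union>e\<in>N p. ball e (\<delta> / 4))"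
    and small: "\<And>p j e. p \<le> j \<Longrightarrow> e \<in> N p \<Longrightarrow> \<bar>\<phi> e (z j)\<bar> \<le> \<delta> / 4 * (1 / 2) ^ j"
    and "p \<le> n" and a: "\<forall>j<n. \<bar>a j\<bar> \<le> 1"
  shows "norm (\<Sum>j<p. a j *\<^sub>R z j) - \<delta> \<le> norm (\<Sum>j<n. a j *\<^sub>R z j)"
proof -
  have "(\<Sum>j<p. a j *\<^sub>R z j) \<in> unit_combinations p z"
    using a \<open>p \<le> n\<close> by (intro sum_in_unit_combinations) auto
  then obtain e where "e \<in> N p" and "dist e (\<Sum>j<p. a j *\<^sub>R z j) < \<delta> / 4"
    using net[of p] by auto
  then have "norm ((\<Sum>j<p. a j *\<^sub>R z j) - e) \<le> \<delta> / 4"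
    by (simp add: dist_norm norm_minus_commute)
  then have "norm (\<Sum>j<p. a j *\<^sub>R z j) - 2 * (\<delta> / 4) - (\<Sum>j\<in>{p..<n}. \<delta> / 4 * (1 / 2) ^ j)
      \<le> norm (\<Sum>j<n. a j *\<^sub>R z j)"
    using \<phi> \<open>p \<le> n\<close> a small[OF _ \<open>e \<in> N p\<close>]
    by (intro norm_partial_sum_almost_le[where f = "\<phi> e"]) auto
  moreover have "(\<Sum>j\<in>{p..<n}. (1 / 2 :: real) ^ j) < 2"
    using geometric_sum_less[of "1 / 2 :: real" "{p..<n}"] by simp
  then have "(\<Sum>j\<in>{p..<n}. \<delta> / 4 * (1 / 2) ^ j) \<le> \<delta> / 2"
    unfolding sum_distrib_left[symmetric] using \<open>\<delta> > 0\<close> by simp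
  ultimately show ?thesis by linarith
qed

lemma almost_monotone_subsequence:
  fixes u :: "nat \<Rightarrow> 'a::real_normed_vector"
  assumes null: "\<And>f. f \<in> dual_unit_ball \<Longrightarrow> (\<lambda>k. f (u k)) \<longlonglongrightarrow> 0" and "\<delta> > 0"
  shows "\<exists>\<sigma>::nat \<Rightarrow> nat. strict_mono \<sigma> \<and> (\<forall>a p n. p \<le> n \<longrightarrow> (\<forall>j<n. \<bar>a j\<bar> \<le> 1) \<longrightarrow>
           norm (\<Sum>j<p. a j *\<^sub>R u (\<sigma> j)) - \<delta> \<le> norm (\<Sum>j<n. a j *\<^sub>R u (\<sigma> j)))"
proof -
  obtain \<phi> :: "'a \<Rightarrow> 'a \<Rightarrow> real" where \<phi>: "\<And>e. \<phi> e \<in> dual_unit_ball \<and> \<phi> e e = norm e"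
    using norming_functional_exists by metis
  have "\<delta> / 4 > 0" using \<open>\<delta> > 0\<close> by simp
  then have "\<forall>S. \<exists>N. compact S \<longrightarrow> finite N \<and> S \<subseteq> (\<Union>e\<in>N. ball e (\<delta> / 4))"
    using compact_eq_totally_bounded by blast
  from choice[OF this] obtain net :: "'a set \<Rightarrow> 'a set"
    where "\<forall>S. compact S \<longrightarrow> finite (net S) \<and> S \<subseteq> (\<Union>e\<in>net S. ball e (\<delta> / 4))"
    by blast
  then have net: "finite (net (unit_combinations p w))"
    "unit_combinations p w \<subseteq> (\<Union>e\<in>net (unit_combinations p w). ball e (\<delta> / 4))" for p w
    using compact_unit_combinations by blast+
  txt \<open>After the first \<open>p\<close> terms are chosen, every later term is chosen almost annihilated
    by norming functionals of a finite \<open>\<delta>/4\<close>-net of their combinations.\<close>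
  define \<Phi> where "\<Phi> p \<sigma> = \<phi> ` net (unit_combinations p (u \<circ> \<sigma>))" for p \<sigma>
  have "\<exists>\<sigma>. strict_mono \<sigma> \<and>
      (\<forall>p j f. p \<le> j \<longrightarrow> f \<in> \<Phi> p \<sigma> \<longrightarrow> \<bar>f (u (\<sigma> j))\<bar> \<le> \<delta> / 4 * (1 / 2) ^ j)"
  proof (rule subsequence_small_on_finite_families)
    show "finite (\<Phi> p \<sigma>)" for p \<sigma> unfolding \<Phi>_def using net(1) by blast
    show "(\<lambda>k. f (u k)) \<longlonglongrightarrow> 0" if "f \<in> \<Phi> p \<sigma>" for p \<sigma> f
      using that null \<phi> unfolding \<Phi>_def by blast
    show "\<Phi> p \<sigma> = \<Phi> p \<sigma>'" if "\<And>j. j < p \<Longrightarrow> \<sigma> j = \<sigma>' j" for p \<sigma> \<sigma>'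
      unfolding \<Phi>_def using unit_combinations_cong[of p "u \<circ> \<sigma>" "u \<circ> \<sigma>'"] that by simp
    show "\<delta> / 4 * (1 / 2) ^ j > 0" for j using \<open>\<delta> > 0\<close> by simp
  qed
  then obtain \<sigma> where "strict_mono \<sigma>"
    and \<sigma>: "\<And>p j e. p \<le> j \<Longrightarrow> e \<in> net (unit_combinations p (u \<circ> \<sigma>)) \<Longrightarrow>
      \<bar>\<phi> e ((u \<circ> \<sigma>) j)\<bar> \<le> \<delta> / 4 * (1 / 2) ^ j"
    unfolding \<Phi>_def by auto
  have "\<forall>a p n. p \<le> n \<longrightarrow> (\<forall>j<n. \<bar>a j\<bar> \<le> 1) \<longrightarrow>
      norm (\<Sum>j<p. a j *\<^sub>R u (\<sigma> j)) - \<delta> \<le> norm (\<Sum>j<n. a j *\<^sub>R u (\<sigma> j))"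
    using almost_monotone_if_small_on_nets[where z = "u \<circ> \<sigma>"
        and N = "\<lambda>p. net (unit_combinations p (u \<circ> \<sigma>))", OF \<open>\<delta> > 0\<close> \<phi> net(2) \<sigma>]
    by simp
  with \<open>strict_mono \<sigma>\<close> show ?thesis by blast
qed

section \<open>Copies of \<open>c\<^sub>0\<close>\<close>

lemma abs_le_sup_norm:
  assumes "f \<in> c0"
  shows "\<bar>f n\<bar> \<le> sup_norm f"
proof -
  have "bounded (range f)" using assms unfolding c0_def by (auto intro: convergent_imp_bounded)
  then have "bdd_above (range (\<lambda>n. \<bar>f n\<bar>))"
    by (auto simp: bounded_iff bdd_above_def)
  then show ?thesis unfolding sup_norm_def by (rule cSUP_upper[OF UNIV_I])
qed

lemma sup_norm_le: "(\<And>n. \<bar>f n\<bar> \<le> c) \<Longrightarrow> sup_norm f \<le> c"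
  unfolding sup_norm_def by (rule cSUP_least) auto

lemma summable_c0_combination:
  fixes z :: "nat \<Rightarrow> 'a::banach"
  assumes upper: "\<And>a F \<delta>. finite F \<Longrightarrow> (\<And>j. j \<in> F \<Longrightarrow> \<bar>a j\<bar> \<le> \<delta>) \<Longrightarrow> 0 \<le> \<delta> \<Longrightarrow>
      norm (\<Sum>j\<in>F. a j *\<^sub>R z j) \<le> B * \<delta>"
    and "B > 0" and "f \<in> c0"
  shows "summable (\<lambda>j. f j *\<^sub>R z j)"
  unfolding summable_Cauchy
proof (intro allI impI)
  fix r :: real assume "r > 0"
  then have "r / (2 * B) > 0" using \<open>B > 0\<close> by simp
  then obtain N where N: "\<And>j. j \<ge> N \<Longrightarrow> \<bar>f j\<bar> < r / (2 * B)"
    using \<open>f \<in> c0\<close> unfolding c0_def LIMSEQ_iff by auto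
  have "norm (\<Sum>j\<in>{m..<n}. f j *\<^sub>R z j) < r" if "N \<le> m" for m n
  proof -
    have "norm (\<Sum>j\<in>{m..<n}. f j *\<^sub>R z j) \<le> B * (r / (2 * B))"
      using N that \<open>r / (2 * B) > 0\<close> by (intro upper) (auto intro: less_imp_le)
    also have "\<dots> < r" using \<open>r > 0\<close> \<open>B > 0\<close> by simp
    finally show ?thesis .
  qed
  then show "\<exists>N. \<forall>m\<ge>N. \<forall>n. norm (\<Sum>j\<in>{m..<n}. f j *\<^sub>R z j) < r" by blast
qed

lemma contains_c0I:
  fixes z :: "nat \<Rightarrow> 'a::banach"
  assumes "A > 0" "B > 0"
    and lower: "\<And>a m n. m < n \<Longrightarrow> A * \<bar>a m\<bar> \<le> norm (\<Sum>j<n. a j *\<^sub>R z j)"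
    and upper: "\<And>a F \<delta>. finite F \<Longrightarrow> (\<And>j. j \<in> F \<Longrightarrow> \<bar>a j\<bar> \<le> \<delta>) \<Longrightarrow> 0 \<le> \<delta> \<Longrightarrow>
      norm (\<Sum>j\<in>F. a j *\<^sub>R z j) \<le> B * \<delta>"
  shows "contains_c0 TYPE('a)"
proof -
  define T where "T f = (\<Sum>j. f j *\<^sub>R z j)" for f :: "nat \<Rightarrow> real"
  have summable: "summable (\<lambda>j. f j *\<^sub>R z j)" if "f \<in> c0" for f
    using summable_c0_combination[OF upper \<open>B > 0\<close> that] by blast
  then have partial_sums: "(\<lambda>n. \<Sum>j<n. f j *\<^sub>R z j) \<longlonglongrightarrow> T f" if "f \<in> c0" for f
    unfolding T_def using summable_LIMSEQ that by blast
  have "T (\<lambda>n. f n + g n) = T f + T g" if "f \<in> c0" "g \<in> c0" for f g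
    unfolding T_def using suminf_add[OF summable[OF that(1)] summable[OF that(2)]]
    by (simp add: scaleR_add_left)
  moreover have "T (\<lambda>n. c * f n) = c *\<^sub>R T f" if "f \<in> c0" for f c
    unfolding T_def using suminf_scaleR_right[OF summable[OF that], of c] by simp
  moreover have "A * sup_norm f \<le> norm (T f) \<and> norm (T f) \<le> B * sup_norm f" if f: "f \<in> c0" for f
  proof
    have "A * \<bar>f m\<bar> \<le> norm (T f)" for m
      using lower[of m _ f] Suc_le_eq
      by (intro LIMSEQ_le_const[OF tendsto_norm[OF partial_sums[OF f]]] exI[of _ "Suc m"]) auto
    then have "sup_norm f \<le> norm (T f) / A"
      using \<open>A > 0\<close> by (intro sup_norm_le) (simp add: field_simps)
    then show "A * sup_norm f \<le> norm (T f)" using \<open>A > 0\<close> by (simp add: field_simps)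
    have "norm (\<Sum>j<n. f j *\<^sub>R z j) \<le> B * sup_norm f" for n
      using abs_le_sup_norm[OF f] order_trans[OF abs_ge_zero abs_le_sup_norm[OF f]]
      by (intro upper) auto
    then show "norm (T f) \<le> B * sup_norm f"
      by (intro LIMSEQ_le_const2[OF tendsto_norm[OF partial_sums[OF f]]]) auto
  qed
  ultimately show ?thesis
    unfolding contains_c0_def using \<open>A > 0\<close> \<open>B > 0\<close> by blast
qed

lemma norm_sum_ge_if_unit_coefficient:
  fixes z :: "nat \<Rightarrow> 'a::real_normed_vector"
  assumes low: "\<And>j. \<epsilon> \<le> norm (z j)"
    and mono: "\<And>a p n. p \<le> n \<Longrightarrow> \<forall>j<n. \<bar>a j\<bar> \<le> 1 \<Longrightarrow>
      norm (\<Sum>j<p. a j *\<^sub>R z j) - \<epsilon> / 4 \<le> norm (\<Sum>j<n. a j *\<^sub>R z j)"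
    and b: "\<forall>j<n. \<bar>b j\<bar> \<le> 1" and "m < n" "\<bar>b m\<bar> = 1"
  shows "\<epsilon> / 4 \<le> norm (\<Sum>j<n. b j *\<^sub>R z j)"
proof -
  have "\<epsilon> \<le> norm (b m *\<^sub>R z m)" using low[of m] \<open>\<bar>b m\<bar> = 1\<close> by simp
  also have "b m *\<^sub>R z m = (\<Sum>j<Suc m. b j *\<^sub>R z j) - (\<Sum>j<m. b j *\<^sub>R z j)" by simp
  also have "norm \<dots> \<le> norm (\<Sum>j<Suc m. b j *\<^sub>R z j) + norm (\<Sum>j<m. b j *\<^sub>R z j)"
    by (rule norm_triangle_ineq4)
  finally show ?thesis
    using mono[OF _ b, of m] mono[OF _ b, of "Suc m"] \<open>m < n\<close> by simp
qed

lemma lower_c0_estimate: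
  fixes z :: "nat \<Rightarrow> 'a::real_normed_vector"
  assumes "0 \<le> \<epsilon>" and low: "\<And>j. \<epsilon> \<le> norm (z j)"
    and mono: "\<And>a p n. p \<le> n \<Longrightarrow> \<forall>j<n. \<bar>a j\<bar> \<le> 1 \<Longrightarrow>
      norm (\<Sum>j<p. a j *\<^sub>R z j) - \<epsilon> / 4 \<le> norm (\<Sum>j<n. a j *\<^sub>R z j)"
    and "m < n"
  shows "\<epsilon> / 4 * \<bar>a m\<bar> \<le> norm (\<Sum>j<n. a j *\<^sub>R z j)"
proof -
  define M where "M = Max ((\<lambda>j. \<bar>a j\<bar>) ` {..<n})"
  have M_ge: "\<bar>a j\<bar> \<le> M" if "j < n" for j unfolding M_def using that by (intro Max_ge) auto
  have "M \<in> (\<lambda>j. \<bar>a j\<bar>) ` {..<n}" unfolding M_def using \<open>m < n\<close> by (intro Max_in) auto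
  then obtain m' where "m' < n" "\<bar>a m'\<bar> = M" by auto
  show ?thesis
  proof (cases "M = 0")
    case True
    then show ?thesis using M_ge[OF \<open>m < n\<close>] by simp
  next
    case False
    then have "M > 0" using M_ge[OF \<open>m < n\<close>] by linarith
    define b where "b j = a j / M" for j
    have "\<forall>j<n. \<bar>b j\<bar> \<le> 1" using M_ge \<open>M > 0\<close> by (simp add: b_def)
    moreover have "\<bar>b m'\<bar> = 1" using \<open>\<bar>a m'\<bar> = M\<close> \<open>M > 0\<close> by (simp add: b_def)
    ultimately have "\<epsilon> / 4 \<le> norm (\<Sum>j<n. b j *\<^sub>R z j)"
      using norm_sum_ge_if_unit_coefficient[OF low mono _ \<open>m' < n\<close>] by blast
    moreover have "(\<Sum>j<n. a j *\<^sub>R z j) = M *\<^sub>R (\<Sum>j<n. b j *\<^sub>R z j)"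
      using \<open>M > 0\<close> unfolding b_def scaleR_sum_right by simp
    ultimately have "\<epsilon> / 4 * M \<le> norm (\<Sum>j<n. a j *\<^sub>R z j)"
      using \<open>M > 0\<close> by (simp add: mult.commute)
    moreover have "\<epsilon> / 4 * \<bar>a m\<bar> \<le> \<epsilon> / 4 * M"
      using M_ge[OF \<open>m < n\<close>] \<open>0 \<le> \<epsilon>\<close> by (intro mult_left_mono) auto
    ultimately show ?thesis by linarith
  qed
qed

lemma contains_c0_if_subsums_bounded:
  fixes u :: "nat \<Rightarrow> 'a::banach"
  assumes "\<epsilon> > 0" and low: "\<And>k. \<epsilon> \<le> norm (u k)" and bounded: "subsums_bounded u K"
  shows "contains_c0 TYPE('a)"
proof -
  have "norm (u 0) \<le> K" using bounded[unfolded subsums_bounded_def, rule_format, of "{0}"] by simp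
  then have "K > 0" using low[of 0] \<open>\<epsilon> > 0\<close> by linarith
  obtain \<sigma> :: "nat \<Rightarrow> nat" where "strict_mono \<sigma>"
    and mono: "\<forall>a p n. p \<le> n \<longrightarrow> (\<forall>j<n. \<bar>a j\<bar> \<le> 1) \<longrightarrow>
      norm (\<Sum>j<p. a j *\<^sub>R u (\<sigma> j)) - \<epsilon> / 4 \<le> norm (\<Sum>j<n. a j *\<^sub>R u (\<sigma> j))"
    using almost_monotone_subsequence[of u "\<epsilon> / 4"] \<open>\<epsilon> > 0\<close>
      functional_tendsto_zero_if_subsums_bounded[OF _ bounded]
    by auto
  have bounded_sub: "subsums_bounded (u \<circ> \<sigma>) K"
    using subsums_bounded_comp[OF strict_mono_imp_inj_on[OF \<open>strict_mono \<sigma>\<close>] bounded] .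
  show ?thesis
  proof (rule contains_c0I[of "\<epsilon> / 4" "2 * K" "u \<circ> \<sigma>"])
    show "\<epsilon> / 4 > 0" "2 * K > 0" using \<open>\<epsilon> > 0\<close> \<open>K > 0\<close> by auto
    show "\<epsilon> / 4 * \<bar>a m\<bar> \<le> norm (\<Sum>j<n. a j *\<^sub>R (u \<circ> \<sigma>) j)" if "m < n" for a m n
      using lower_c0_estimate[of \<epsilon> "u \<circ> \<sigma>"] low mono \<open>\<epsilon> > 0\<close> that by simp
    show "norm (\<Sum>j\<in>F. a j *\<^sub>R (u \<circ> \<sigma>) j) \<le> 2 * K * \<delta>"
      if "finite F" "\<And>j. j \<in> F \<Longrightarrow> \<bar>a j\<bar> \<le> \<delta>" "0 \<le> \<delta>" for a F \<delta>
      using norm_sum_scaleR_le[OF bounded_sub that] .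
  qed
qed

section \<open>The Bessaga--Pelczynski theorem\<close>

lemma disjoint_family_in_tails:
  fixes Q :: "nat set \<Rightarrow> bool"
  assumes "\<And>N. \<exists>F. finite F \<and> F \<subseteq> {N..} \<and> Q F"
  shows "\<exists>B :: nat \<Rightarrow> nat set. disjoint_family B \<and> (\<forall>j. finite (B j) \<and> Q (B j))"
proof -
  define P where "P Bs F \<longleftrightarrow> finite F \<and> Q F \<and> (\<forall>G\<in>set Bs. \<forall>m\<in>G. \<forall>n\<in>F. m < n)"
    for Bs :: "nat set list" and F
  have "\<exists>F. P Bs F" if "\<forall>i<length Bs. P (take i Bs) (Bs ! i)" for Bs
  proof -
    have "\<forall>G\<in>set Bs. finite G" using that unfolding P_def by (metis in_set_conv_nth)
    then have "finite (\<Union>(set Bs))" by simp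
    have "m < n" if "m \<in> \<Union>(set Bs)" "Suc (Max (\<Union>(set Bs))) \<le> n" for m n
      using Max_ge[OF \<open>finite (\<Union>(set Bs))\<close> that(1)] that(2) by linarith
    moreover obtain F where "finite F" "F \<subseteq> {Suc (Max (\<Union>(set Bs)))..}" "Q F" using assms by blast
    ultimately have "P Bs F" unfolding P_def by auto
    then show ?thesis ..
  qed
  then obtain B where B: "\<And>n. P (map B [0..<n]) (B n)"
    using dependent_choice_prefixes[of P] by blast
  have "B i \<inter> B j = {}" if "i < j" for i j
  proof -
    have "B i \<in> set (map B [0..<j])" using that by simp
    then have "\<forall>m\<in>B i. \<forall>n\<in>B j. m < n" using B[of j] unfolding P_def by blast
    then show ?thesis by fastforce
  qed
  then have "disjoint_family B"
    unfolding disjoint_family_on_def by (metis Int_commute linorder_neqE_nat)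
  moreover have "finite (B j) \<and> Q (B j)" for j using B[of j] unfolding P_def by blast
  ultimately show ?thesis by blast
qed

lemma uncond_convergent_if_subseries_Cauchy:
  fixes x :: "nat \<Rightarrow> 'a::banach"
  assumes Cauchy: "\<And>e. e > 0 \<Longrightarrow> \<exists>N. \<forall>F. finite F \<longrightarrow> F \<subseteq> {N..} \<longrightarrow> norm (\<Sum>n\<in>F. x n) < e"
  shows "uncond_convergent x"
  unfolding uncond_convergent_def
proof (intro allI impI)
  fix p :: "nat \<Rightarrow> nat" assume "bij p"
  then have "inj p" by (rule bij_is_inj)
  show "summable (\<lambda>n. x (p n))"
    unfolding summable_Cauchy
  proof (intro allI impI)
    fix e :: real assume "e > 0"
    then obtain N where N: "\<And>F. finite F \<Longrightarrow> F \<subseteq> {N..} \<Longrightarrow> norm (\<Sum>n\<in>F. x n) < e"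
      using Cauchy by blast
    have "finite (p -` {..<N})" using \<open>inj p\<close> by (intro finite_vimageI) auto
    then obtain M where M: "p -` {..<N} \<subseteq> {..<M}" using finite_nat_bounded by blast
    have "norm (\<Sum>i\<in>{m..<n}. x (p i)) < e" if "M \<le> m" for m n
    proof -
      have "N \<le> p i" if "m \<le> i" for i
      proof (rule ccontr)
        assume "\<not> N \<le> p i"
        then have "i \<in> p -` {..<N}" by simp
        then have "i < M" using M by blast
        then show False using \<open>M \<le> m\<close> \<open>m \<le> i\<close> by simp
      qed
      then have "p ` {m..<n} \<subseteq> {N..}" by auto
      moreover have "(\<Sum>i\<in>{m..<n}. x (p i)) = (\<Sum>k\<in>p ` {m..<n}. x k)"
        using sum.reindex[OF inj_on_subset[OF \<open>inj p\<close> subset_UNIV], of x "{m..<n}"] by simp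
      ultimately show ?thesis using N by simp
    qed
    then show "\<exists>M. \<forall>m\<ge>M. \<forall>n. norm (\<Sum>i\<in>{m..<n}. x (p i)) < e" by blast
  qed
qed

lemma subseries_Cauchy_if_subsums_bounded:
  fixes x :: "nat \<Rightarrow> 'a::banach"
  assumes "\<not> contains_c0 TYPE('a)" and bounded: "subsums_bounded x K" and "e > 0"
  shows "\<exists>N. \<forall>F. finite F \<longrightarrow> F \<subseteq> {N..} \<longrightarrow> norm (\<Sum>n\<in>F. x n) < e"
proof (rule ccontr)
  assume "\<nexists>N. \<forall>F. finite F \<longrightarrow> F \<subseteq> {N..} \<longrightarrow> norm (\<Sum>n\<in>F. x n) < e"
  then have "\<exists>F. finite F \<and> F \<subseteq> {N..} \<and> e \<le> norm (\<Sum>n\<in>F. x n)" for N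
    by (auto simp: not_less)
  from disjoint_family_in_tails[OF this] obtain B :: "nat \<Rightarrow> nat set" where "disjoint_family B"
    and B: "\<And>j. finite (B j) \<and> e \<le> norm (\<Sum>n\<in>B j. x n)" by blast
  define u where "u j = (\<Sum>n\<in>B j. x n)" for j
  have "subsums_bounded u K"
    unfolding subsums_bounded_def
  proof (intro allI impI)
    fix A :: "nat set" assume "finite A"
    have "(\<Sum>k\<in>A. u k) = (\<Sum>n\<in>(\<Union>k\<in>A. B k). x n)"
      unfolding u_def using \<open>finite A\<close> B disjoint_family_on_mono[OF subset_UNIV \<open>disjoint_family B\<close>]
      by (simp add: sum.UNION_disjoint_family)
    moreover have "finite (\<Union>k\<in>A. B k)" using \<open>finite A\<close> B by blast
    ultimately show "norm (\<Sum>k\<in>A. u k) \<le> K" using bounded unfolding subsums_bounded_def by simp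
  qed
  moreover have "e \<le> norm (u j)" for j using B unfolding u_def by blast
  ultimately have "contains_c0 TYPE('a)"
    using contains_c0_if_subsums_bounded[OF \<open>e > 0\<close>] by blast
  then show False using assms(1) by contradiction
qed

lemma uncond_convergent_if_subsums_bounded:
  fixes x :: "nat \<Rightarrow> 'a::banach"
  assumes "\<not> contains_c0 TYPE('a)" and "subsums_bounded x K"
  shows "uncond_convergent x"
  using subseries_Cauchy_if_subsums_bounded[OF assms]
  by (rule uncond_convergent_if_subseries_Cauchy)

lemma tail_subsums_unbounded:
  fixes x :: "nat \<Rightarrow> 'a::banach"
  assumes "\<not> contains_c0 TYPE('a)" and "\<not> uncond_convergent x"
  shows "\<exists>F. finite F \<and> F \<subseteq> {N..} \<and> M < norm (\<Sum>n\<in>F. x n)"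
proof (rule ccontr)
  assume "\<nexists>F. finite F \<and> F \<subseteq> {N..} \<and> M < norm (\<Sum>n\<in>F. x n)"
  then have tail: "norm (\<Sum>n\<in>F. x n) \<le> M" if "finite F" "F \<subseteq> {N..}" for F
    using that by (auto simp: not_less)
  have "subsums_bounded x ((\<Sum>i<N. norm (x i)) + M)"
    unfolding subsums_bounded_def
  proof (intro allI impI)
    fix F :: "nat set" assume "finite F"
    have "norm (\<Sum>n\<in>F. x n) \<le> norm (\<Sum>n\<in>F \<inter> {..<N}. x n) + norm (\<Sum>n\<in>F - {..<N}. x n)"
      using sum.Int_Diff[OF \<open>finite F\<close>, of x "{..<N}"] norm_triangle_ineq by metis
    also have "norm (\<Sum>n\<in>F \<inter> {..<N}. x n) \<le> (\<Sum>i<N. norm (x i))"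
      by (rule order_trans[OF norm_sum sum_mono2]) auto
    also have "norm (\<Sum>n\<in>F - {..<N}. x n) \<le> M" using \<open>finite F\<close> by (intro tail) auto
    finally show "norm (\<Sum>n\<in>F. x n) \<le> (\<Sum>i<N. norm (x i)) + M" by simp
  qed
  then show False using uncond_convergent_if_subsums_bounded assms by blast
qed

section \<open>Meagre sets of sequences\<close>

lemma topspace_baire_top [simp]: "topspace baire_top = UNIV"
  unfolding baire_top_def by simp

lemma nowhere_dense_inI:
  assumes "N \<subseteq> topspace T"
    and shrink: "\<And>U. openin T U \<Longrightarrow> U \<noteq> {} \<Longrightarrow> \<exists>V. openin T V \<and> V \<noteq> {} \<and> V \<subseteq> U \<and> V \<inter> N = {}"
  shows "nowhere_dense_in T N"
proof -
  have "T interior_of (T closure_of N) = {}"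
  proof (rule ccontr)
    assume "T interior_of (T closure_of N) \<noteq> {}"
    from shrink[OF openin_interior_of this] obtain V where
      V: "openin T V" "V \<noteq> {}" "V \<subseteq> T interior_of (T closure_of N)" "V \<inter> N = {}"
      by blast
    have "V \<inter> T closure_of N = {}" using openin_Int_closure_of_eq_empty[OF V(1), of N] V(4) by simp
    moreover have "V \<subseteq> T closure_of N"
      using V(3) interior_of_subset[of T "T closure_of N"] by (rule subset_trans)
    ultimately show False using V(2) by (simp add: Int_absorb2)
  qed
  then show ?thesis unfolding nowhere_dense_in_def using assms(1) by blast
qed

lemma openin_baire_cylinder: "openin (subtopology baire_top X) {t \<in> X. \<forall>i<k. t i = s i}"
proof -
  have "finite {i \<in> UNIV. (if i < k then {s i} else UNIV) \<noteq>
      topspace (discrete_topology (UNIV :: nat set))}"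
    by (rule finite_subset[of _ "{..<k}"]) auto
  then have "openin baire_top (PiE UNIV (\<lambda>i. if i < k then {s i} else UNIV))"
    unfolding baire_top_def openin_PiE_gen by auto
  moreover have "{t \<in> X. \<forall>i<k. t i = s i} = PiE UNIV (\<lambda>i. if i < k then {s i} else UNIV) \<inter> X"
    by (auto simp: PiE_iff, metis singletonD)
  ultimately show ?thesis by (simp add: openin_subtopology_Int)
qed

lemma baire_cylinder_subset_openin:
  assumes "openin (subtopology baire_top X) U" and "s \<in> U"
  shows "\<exists>k. {t \<in> X. \<forall>i<k. t i = s i} \<subseteq> U"
proof -
  obtain V where V: "openin baire_top V" "U = V \<inter> X"
    using assms(1) unfolding openin_subtopology by blast
  have "s \<in> V" using V(2) \<open>s \<in> U\<close> by blast
  then obtain W where W: "finite {i \<in> UNIV. W i \<noteq> topspace (discrete_topology (UNIV :: nat set))}"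
      "s \<in> PiE UNIV W" "PiE UNIV W \<subseteq> V"
    using V(1) unfolding baire_top_def openin_product_topology_alt by blast
  then have "finite {i. W i \<noteq> UNIV}" by simp
  then obtain k where k: "{i. W i \<noteq> UNIV} \<subseteq> {..<k}" using finite_nat_bounded by blast
  have "t \<in> PiE UNIV W" if "\<forall>i<k. t i = s i" for t
  proof -
    have "t i \<in> W i" for i
    proof (cases "i < k")
      case True
      then show ?thesis using that W(2) by (auto simp: PiE_iff)
    next
      case False
      then have "W i = UNIV" using k by auto
      then show ?thesis by simp
    qed
    then show ?thesis by (simp add: PiE_iff)
  qed
  then have "{t \<in> X. \<forall>i<k. t i = s i} \<subseteq> U" using W(3) V(2) by blast
  then show ?thesis ..
qed

lemma nowhere_dense_bounded_partial_sums:
  fixes x :: "nat \<Rightarrow> 'a::real_normed_vector"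
  assumes extend: "\<And>s k. s \<in> X \<Longrightarrow> \<exists>w\<in>X. \<exists>n\<ge>k. (\<forall>i<k. w i = s i) \<and> M < norm (\<Sum>i<n. x (w i))"
  shows "nowhere_dense_in (subtopology baire_top X) {s \<in> X. \<forall>n. norm (\<Sum>i<n. x (s i)) \<le> M}"
proof (rule nowhere_dense_inI)
  show "{s \<in> X. \<forall>n. norm (\<Sum>i<n. x (s i)) \<le> M} \<subseteq> topspace (subtopology baire_top X)" by auto
next
  fix U assume U: "openin (subtopology baire_top X) U" "U \<noteq> {}"
  then obtain s where "s \<in> U" by blast
  then have "s \<in> X" using openin_subset[OF U(1)] by auto
  obtain k where k: "{t \<in> X. \<forall>i<k. t i = s i} \<subseteq> U"
    using baire_cylinder_subset_openin[OF U(1) \<open>s \<in> U\<close>] by blast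
  obtain w n where w: "w \<in> X" "n \<ge> k" "\<forall>i<k. w i = s i" and large: "M < norm (\<Sum>i<n. x (w i))"
    using extend[OF \<open>s \<in> X\<close>, of k] by blast
  define V where "V = {t \<in> X. \<forall>i<n. t i = w i}"
  have "t \<notin> {s \<in> X. \<forall>n. norm (\<Sum>i<n. x (s i)) \<le> M}" if "t \<in> V" for t
  proof -
    have "(\<Sum>i<n. x (t i)) = (\<Sum>i<n. x (w i))" using that unfolding V_def by simp
    then have "\<not> norm (\<Sum>i<n. x (t i)) \<le> M" using large by simp
    then show ?thesis by blast
  qed
  then have "V \<inter> {s \<in> X. \<forall>n. norm (\<Sum>i<n. x (s i)) \<le> M} = {}" by blast
  moreover have "openin (subtopology baire_top X) V" unfolding V_def by (rule openin_baire_cylinder)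
  moreover have "w \<in> V" using w(1) unfolding V_def by simp
  moreover have "V \<subseteq> U" using k w(2,3) unfolding V_def by auto
  ultimately show "\<exists>V. openin (subtopology baire_top X) V \<and> V \<noteq> {} \<and> V \<subseteq> U \<and>
      V \<inter> {s \<in> X. \<forall>n. norm (\<Sum>i<n. x (s i)) \<le> M} = {}" by blast
qed

lemma meager_in_bounded_partial_sums:
  fixes x :: "nat \<Rightarrow> 'a::real_normed_vector"
  assumes extend: "\<And>s k M. s \<in> X \<Longrightarrow> \<exists>w\<in>X. \<exists>n\<ge>k. (\<forall>i<k. w i = s i) \<and> M < norm (\<Sum>i<n. x (w i))"
  shows "meager_in (subtopology baire_top X) {s \<in> X. bounded (range (\<lambda>n. \<Sum>i<n. x (s i)))}"
proof -
  define E where "E M = {s \<in> X. \<forall>n. norm (\<Sum>i<n. x (s i)) \<le> real M}" for M :: nat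
  have "{s \<in> X. bounded (range (\<lambda>n. \<Sum>i<n. x (s i)))} \<subseteq> (\<Union>M. E M)"
  proof
    fix s assume "s \<in> {s \<in> X. bounded (range (\<lambda>n. \<Sum>i<n. x (s i)))}"
    then obtain B where "s \<in> X" and B: "\<And>n. norm (\<Sum>i<n. x (s i)) \<le> B"
      unfolding bounded_iff by blast
    then have "s \<in> E (nat \<lceil>B\<rceil>)"
      unfolding E_def using order_trans[OF B real_nat_ceiling_ge] by blast
    then show "s \<in> (\<Union>M. E M)" by blast
  qed
  moreover have "nowhere_dense_in (subtopology baire_top X) (E M)" for M
    unfolding E_def by (rule nowhere_dense_bounded_partial_sums) (rule extend)
  then have "\<forall>N\<in>range E. nowhere_dense_in (subtopology baire_top X) N" by blast
  moreover have "countable (range E)" by simp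
  ultimately show ?thesis unfolding meager_in_def by blast
qed

lemma strict_mono_extend_sorted_list:
  fixes xs :: "nat list"
  assumes "sorted_wrt (<) xs"
  shows "\<exists>w. strict_mono w \<and> (\<forall>i<length xs. w i = xs ! i)"
proof -
  define C where "C = Suc (Max (insert 0 (set xs)))"
  define w where "w i = (if i < length xs then xs ! i else C + i)" for i
  have C: "xs ! i < C + j" if "i < length xs" for i j
  proof -
    have "xs ! i \<le> Max (insert 0 (set xs))" using that by (intro Max_ge) auto
    then show ?thesis unfolding C_def by simp
  qed
  have "w i < w (Suc i)" for i
    using sorted_wrt_nth_less[OF assms, of i "Suc i"] C[of i "Suc i"] unfolding w_def by auto
  then have "strict_mono w" by (simp add: strict_mono_Suc_iff)
  then show ?thesis unfolding w_def by auto
qed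

lemma bij_extend_distinct_list:
  fixes xs :: "nat list"
  assumes "distinct xs"
  shows "\<exists>w. bij w \<and> (\<forall>i<length xs. w i = xs ! i)"
proof -
  define n where "n = length xs"
  have "infinite (- set xs)" by (simp add: Compl_eq_Diff_UNIV infinite_UNIV_nat)
  then have enum: "bij_betw (enumerate (- set xs)) UNIV (- set xs)" by (rule bij_enumerate)
  have shift: "bij_betw (\<lambda>i. i - n) {n..} UNIV"
    unfolding bij_betw_def by (auto simp: inj_on_def image_iff intro!: bexI[of _ "_ + n"])
  have tail: "bij_betw (\<lambda>i. enumerate (- set xs) (i - n)) {n..} (- set xs)"
    using bij_betw_trans[OF shift enum] unfolding comp_def .
  define w where "w i = (if i \<in> {..<n} then xs ! i else enumerate (- set xs) (i - n))" for i
  have "bij_betw w ({..<n} \<union> {n..}) (set xs \<union> - set xs)"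
    unfolding w_def using bij_betw_nth[OF assms, of "{..<n}" "set xs"] tail
    by (intro bij_betw_disjoint_Un) (auto simp: n_def)
  moreover have "{..<n} \<union> {n..} = UNIV" by auto
  ultimately have "bij w" by simp
  moreover have "\<forall>i<length xs. w i = xs ! i" unfolding w_def n_def by simp
  ultimately show ?thesis by blast
qed

lemma sum_lessThan_eq_sum_list:
  assumes "\<forall>i<length xs. w i = xs ! i"
  shows "(\<Sum>i<length xs. x (w i)) = sum_list (map x xs)"
  using assms by (simp add: sum_list_sum_nth atLeast0LessThan)

lemma extension_with_large_partial_sum:
  fixes x :: "nat \<Rightarrow> 'a::real_normed_vector"
  assumes unbounded: "\<And>N M. \<exists>F. finite F \<and> F \<subseteq> {N..} \<and> M < norm (\<Sum>n\<in>F. x n)"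
    and extend: "\<And>s k F. s \<in> X \<Longrightarrow> finite F \<Longrightarrow> (\<And>n i. n \<in> F \<Longrightarrow> i < k \<Longrightarrow> s i < n) \<Longrightarrow>
      \<exists>w\<in>X. \<forall>i<k + card F. w i = (map s [0..<k] @ sorted_list_of_set F) ! i"
    and "s \<in> X"
  shows "\<exists>w\<in>X. \<exists>n\<ge>k. (\<forall>i<k. w i = s i) \<and> M < norm (\<Sum>i<n. x (w i))"
proof -
  define P where "P = (\<Sum>i<k. x (s i))"
  txt \<open>For \<open>k = 0\<close> the bound \<open>Max {}\<close> is an unspecified number, which does no harm.\<close>
  obtain F where F: "finite F" "F \<subseteq> {Suc (Max (s ` {..<k}))..}" "M + norm P < norm (\<Sum>n\<in>F. x n)"
    using unbounded by blast
  have "s i < n" if "n \<in> F" "i < k" for n i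
  proof -
    have "s i \<le> Max (s ` {..<k})" using \<open>i < k\<close> by (intro Max_ge) auto
    then show ?thesis using F(2) \<open>n \<in> F\<close> by auto
  qed
  then obtain w where "w \<in> X"
    and w: "\<forall>i<k + card F. w i = (map s [0..<k] @ sorted_list_of_set F) ! i"
    using extend[OF \<open>s \<in> X\<close> F(1)] by blast
  have "(\<Sum>i<k + card F. x (w i)) = sum_list (map x (map s [0..<k] @ sorted_list_of_set F))"
    using sum_lessThan_eq_sum_list[of "map s [0..<k] @ sorted_list_of_set F" w x] w F(1) by simp
  also have "\<dots> = P + (\<Sum>n\<in>F. x n)"
    unfolding P_def using F(1)
    by (simp add: sum_list_distinct_conv_sum_set atLeast0LessThan[symmetric] comp_def)
  finally have "M < norm (\<Sum>i<k + card F. x (w i))"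
    using F(3) norm_diff_ineq[of "\<Sum>n\<in>F. x n" P] by (simp add: add.commute)
  moreover have "\<forall>i<k. w i = s i" using w by (simp add: nth_append)
  ultimately show ?thesis using \<open>w \<in> X\<close> le_add1 by blast
qed

lemma S_incr_extend:
  assumes "s \<in> S_incr" and "finite F" and above: "\<And>n i. n \<in> F \<Longrightarrow> i < k \<Longrightarrow> s i < n"
  shows "\<exists>w\<in>S_incr. \<forall>i<k + card F. w i = (map s [0..<k] @ sorted_list_of_set F) ! i"
proof -
  have "sorted_wrt (<) (map s [0..<k])"
    using \<open>s \<in> S_incr\<close> unfolding S_incr_def sorted_wrt_iff_nth_less by (auto simp: strict_mono_def)
  moreover have "sorted_wrt (<) (sorted_list_of_set F)" by (rule strict_sorted_list_of_set)
  ultimately have "sorted_wrt (<) (map s [0..<k] @ sorted_list_of_set F)"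
    using above \<open>finite F\<close> by (auto simp: sorted_wrt_append)
  from strict_mono_extend_sorted_list[OF this] show ?thesis
    using \<open>finite F\<close> unfolding S_incr_def by auto
qed

lemma P_perm_extend:
  assumes "s \<in> P_perm" and "finite F" and above: "\<And>n i. n \<in> F \<Longrightarrow> i < k \<Longrightarrow> s i < n"
  shows "\<exists>w\<in>P_perm. \<forall>i<k + card F. w i = (map s [0..<k] @ sorted_list_of_set F) ! i"
proof -
  have "inj s" using \<open>s \<in> P_perm\<close> unfolding P_perm_def by (simp add: bij_is_inj)
  then have "distinct (map s [0..<k])" by (simp add: distinct_map inj_on_subset[OF _ subset_UNIV])
  moreover have "s i \<notin> F" if "i < k" for i using above[of "s i" i] that by auto
  ultimately have "distinct (map s [0..<k] @ sorted_list_of_set F)"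
    using \<open>finite F\<close> by auto
  from bij_extend_distinct_list[OF this] show ?thesis
    using \<open>finite F\<close> unfolding P_perm_def by auto
qed

theorem mainTheorem4:
  fixes x :: "nat \<Rightarrow> 'a::banach"
  assumes "\<not> contains_c0 TYPE('a)"
    and "\<not> uncond_convergent x"
  shows "meager_in (subtopology baire_top S_incr)
           {s \<in> S_incr. bounded (range (\<lambda>n. \<Sum>i<n. x (s i)))}
         \<and> meager_in (subtopology baire_top P_perm)
           {p \<in> P_perm. bounded (range (\<lambda>n. \<Sum>i<n. x (p i)))}"
proof -
  have unbounded: "\<And>N M. \<exists>F. finite F \<and> F \<subseteq> {N..} \<and> M < norm (\<Sum>n\<in>F. x n)"
    using tail_subsums_unbounded[OF assms] by blast
  have
    "meager_in (subtopology baire_top S_incr) {s \<in> S_incr. bounded (range (\<lambda>n. \<Sum>i<n. x (s i)))}"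
    by (rule meager_in_bounded_partial_sums, rule extension_with_large_partial_sum[OF unbounded])
      (rule S_incr_extend)
  moreover have
    "meager_in (subtopology baire_top P_perm) {p \<in> P_perm. bounded (range (\<lambda>n. \<Sum>i<n. x (p i)))}"
    by (rule meager_in_bounded_partial_sums, rule extension_with_large_partial_sum[OF unbounded])
      (rule P_perm_extend)
  ultimately show ?thesis ..
qed

end
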